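(* For integers $q\ge1$, $a$, $n$ let $S(q,a,n)=\sum_{x=1}^q e\big(\frac{ax^2+nx}{q}\big)$, and for integers $n_1,n_2,n_3,m$ let $$T(q;n_1,n_2,n_3,m)=\sum_{\substack{a=1\\ (a,q)=1}}^q S(q,a,n_1)S(q,a,n_2)S(q,a,n_3)\,e\Big(\frac{\overline{a}\,m}{q}\Big),$$ where $\overline{a}$ is the inverse of $a$ modulo $q$. Let $p>2$ be a prime. Then for every positive integer $r$ and all integers $n_1,n_2,n_3,m$, $$|T(p^r;n_1,n_2,n_3,m)|\le p^{5r/2},$$ and moreover $$|T(p;n_1,n_2,n_3,m)|\le p^{2}.$$
   Context: $e(z)=e^{2\pi i z}$. *)

theory Defs
  imports "HOL-Analysis.Analysis" "HOL-Number_Theory.Number_Theory"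
begin

definition e :: "real \<Rightarrow> complex" where
  "e z = exp (2 * pi * \<i> * complex_of_real z)"

definition inv_mod :: "int \<Rightarrow> int \<Rightarrow> int" where
  "inv_mod q a = (THE b. b \<in> {1..q} \<and> [a * b = 1] (mod q))"

definition S :: "int \<Rightarrow> int \<Rightarrow> int \<Rightarrow> complex" where
  "S q a n = (\<Sum>x\<in>{1..q}. e (real_of_int (a * x^2 + n * x) / real_of_int q))"

definition T :: "int \<Rightarrow> int \<Rightarrow> int \<Rightarrow> int \<Rightarrow> int \<Rightarrow> complex" where
  "T q n1 n2 n3 m = (\<Sum>a\<in>{a\<in>{1..q}. coprime a q}.
      S q a n1 * S q a n2 * S q a n3 * e (real_of_int (inv_mod q a * m) / real_of_int q))"

end

theory Submission
  imports Defs
begin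

text \<open>For odd \<open>q\<close> and \<open>a\<close> prime to \<open>q\<close> the Gauss sum \<open>S q a n\<close> has absolute value exactly
  \<open>\<surd>q\<close>, so each of the at most \<open>q\<close> summands of \<open>T q\<close> has size \<open>q\<^sup>3\<^sup>/\<^sup>2\<close>; this gives the bound for
  \<open>q = p\<^sup>r\<close>. For \<open>q = p\<close> prime one saves a further \<open>\<surd>p\<close>. Let \<open>a'\<close> and \<open>h\<close> be the inverses of \<open>a\<close>
  and \<open>2\<close> modulo \<open>p\<close>. Completing the square gives \<open>S p a n = e(-a' h\<^sup>2 n\<^sup>2 / p) S p a 0\<close>, and
  \<open>S p a 0 = (a/p) S p 1 0\<close>, so \<open>T p = S p 1 0\<^sup>3 \<Sum>\<^sub>a (a/p) e(a' K / p)\<close> for an integer \<open>K\<close>.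
  Since \<open>(a'/p) = (a/p)\<close>, the substitution \<open>b = a'\<close> turns the last sum into a Gauss sum of the
  Legendre symbol, which vanishes or has absolute value \<open>\<surd>p\<close>.\<close>

section \<open>Additive characters modulo \<open>q\<close>\<close>

lemma e_add: "e (x + y) = e x * e y"
  unfolding e_def by (simp add: distrib_left exp_add[symmetric])

lemma e_of_int: "e (of_int k) = 1"
proof -
  have "e (of_int k) = exp (complex_of_real (2 * of_int k * pi) * \<i>)"
    unfolding e_def by (simp add: mult_ac)
  also have "\<dots> = 1" by (rule exp_integer_2pi) simp
  finally show ?thesis .
qed

lemma norm_e [simp]: "cmod (e x) = 1"
  unfolding e_def by (simp add: norm_exp_eq_Re)

lemma cnj_e: "cnj (e x) = e (- x)"
  unfolding e_def by (simp add: exp_cnj)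

lemma e_eq_1_iff: "e x = 1 \<longleftrightarrow> x \<in> \<int>"
proof
  assume "e x = 1"
  then obtain n :: int where "2 * pi * x = of_int (2 * n) * pi"
    unfolding e_def exp_eq_1 by auto
  then have "x = of_int n" by simp
  then show "x \<in> \<int>" by simp
qed (auto elim: Ints_cases simp: e_of_int)

definition e_mod :: "int \<Rightarrow> int \<Rightarrow> complex" where
  "e_mod q k = e (of_int k / of_int q)"

lemma e_mod_add: "q \<noteq> 0 \<Longrightarrow> e_mod q (k + l) = e_mod q k * e_mod q l"
  unfolding e_mod_def by (simp add: add_divide_distrib e_add)

lemma e_mod_0 [simp]: "e_mod q 0 = 1"
  unfolding e_mod_def using e_of_int[of 0] by simp

lemma norm_e_mod [simp]: "cmod (e_mod q k) = 1"
  unfolding e_mod_def by simp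

lemma cnj_e_mod: "cnj (e_mod q k) = e_mod q (- k)"
  unfolding e_mod_def by (simp add: cnj_e)

lemma e_mod_eq_1_iff:
  assumes "q \<noteq> 0"
  shows "e_mod q k = 1 \<longleftrightarrow> q dvd k"
proof
  assume "e_mod q k = 1"
  then obtain j where "of_int k / of_int q = (of_int j :: real)"
    unfolding e_mod_def e_eq_1_iff by (auto elim: Ints_cases)
  then have "k = q * j" using assms by (simp add: field_simps flip: of_int_mult)
  then show "q dvd k" by simp
next
  assume "q dvd k"
  then obtain j where "k = q * j" by blast
  then show "e_mod q k = 1" using assms e_of_int[of j] by (simp add: e_mod_def)
qed

lemma e_mod_cong:
  assumes "q \<noteq> 0" "[k = l] (mod q)"
  shows "e_mod q k = e_mod q l"
proof -
  have "e_mod q (k - l) = 1"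
    using assms by (simp add: e_mod_eq_1_iff cong_iff_dvd_diff)
  then show ?thesis using e_mod_add[OF assms(1), of l "k - l"] by simp
qed

section \<open>Complete sums over residues\<close>

lemma sum_residues_affine:
  fixes f :: "int \<Rightarrow> 'a::comm_monoid_add"
  assumes q: "q > 0" and f: "\<And>x. f (x mod q) = f x" and a: "coprime a q"
  shows "(\<Sum>x\<in>{0..<q}. f (a * x + c)) = (\<Sum>x\<in>{0..<q}. f x)"
proof -
  obtain a' where a': "[a * a' = 1] (mod q)" using cong_solve_coprime_int[OF a] by blast
  have "(\<Sum>x\<in>{0..<q}. f (a * x + c)) = (\<Sum>x\<in>{0..<q}. f ((a * x + c) mod q))"
    using f by simp
  also have "\<dots> = (\<Sum>x\<in>{0..<q}. f x)"
  proof (rule sum.reindex_bij_witness[of _ "\<lambda>y. (a' * (y - c)) mod q" "\<lambda>x. (a * x + c) mod q"])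
    fix x assume x: "x \<in> {0..<q}"
    have "[a' * ((a * x + c) mod q - c) = a' * (a * x)] (mod q)"
      by (intro cong_mult cong_refl) (simp add: cong_def mod_diff_left_eq)
    also have "a' * (a * x) = (a * a') * x" by simp
    also have "[\<dots> = 1 * x] (mod q)" by (intro cong_mult a' cong_refl)
    finally show "(a' * ((a * x + c) mod q - c)) mod q = x" using x by (simp add: cong_def)
  next
    fix y assume y: "y \<in> {0..<q}"
    have "[(a' * (y - c)) mod q = a' * (y - c)] (mod q)" by simp
    then have "[a * ((a' * (y - c)) mod q) + c = a * (a' * (y - c)) + c] (mod q)"
      by (intro cong_add cong_mult cong_refl)
    also have "a * (a' * (y - c)) + c = (a * a') * (y - c) + c" by simp
    also have "[\<dots> = 1 * (y - c) + c] (mod q)" by (intro cong_add cong_mult a' cong_refl)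
    finally show "(a * ((a' * (y - c)) mod q) + c) mod q = y" using y by (simp add: cong_def)
  qed (use q in auto)
  finally show ?thesis .
qed

lemma sum_Icc_eq_sum_residues:
  fixes f :: "int \<Rightarrow> 'a::comm_monoid_add"
  assumes "q > 0" and "\<And>x. f (x mod q) = f x"
  shows "(\<Sum>x\<in>{1..q}. f x) = (\<Sum>x\<in>{0..<q}. f x)"
proof -
  have "(\<Sum>x\<in>{1..q}. f x) = (\<Sum>x\<in>{0..<q}. f (1 * x + 1))"
    by (rule sum.reindex_bij_witness[of _ "\<lambda>x. x + 1" "\<lambda>x. x - 1"]) auto
  also have "\<dots> = (\<Sum>x\<in>{0..<q}. f x)" by (rule sum_residues_affine) (use assms in auto)
  finally show ?thesis .
qed

lemma sum_e_mod_linear: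
  assumes q: "q > 0"
  shows "(\<Sum>y\<in>{0..<q}. e_mod q (k * y)) = (if q dvd k then of_int q else 0)"
proof (cases "q dvd k")
  case True
  then have "e_mod q (k * y) = 1" for y using q by (simp add: e_mod_eq_1_iff)
  then show ?thesis using True q by simp
next
  case False
  let ?s = "\<Sum>y\<in>{0..<q}. e_mod q (k * y)"
  have "?s = (\<Sum>y\<in>{0..<q}. e_mod q (k * (1 * y + 1)))"
    by (rule sum_residues_affine[symmetric])
      (use q in \<open>auto intro: e_mod_cong simp: cong_def mod_mult_right_eq\<close>)
  also have "\<dots> = e_mod q k * ?s"
    using q by (simp add: distrib_left e_mod_add sum_distrib_left ac_simps)
  finally have "(e_mod q k - 1) * ?s = 0" by (simp add: algebra_simps)
  moreover have "e_mod q k \<noteq> 1" using False q by (simp add: e_mod_eq_1_iff)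
  ultimately show ?thesis using False by simp
qed

section \<open>Quadratic Gauss sums\<close>

lemma e_mod_quadratic_mod:
  assumes "q \<noteq> 0"
  shows "e_mod q (a * (x mod q)^2 + n * (x mod q)) = e_mod q (a * x^2 + n * x)"
  by (rule e_mod_cong[OF assms]) (intro cong_add cong_mult cong_refl cong_pow; simp)

lemma S_eq_sum_residues:
  assumes "q > 0"
  shows "S q a n = (\<Sum>x\<in>{0..<q}. e_mod q (a * x^2 + n * x))"
  unfolding S_def e_mod_def[symmetric]
  by (rule sum_Icc_eq_sum_residues) (use assms e_mod_quadratic_mod in auto)

lemma S_times_cnj_S:
  assumes q: "q > 0" and a: "coprime (2 * a) q"
  shows "S q a n * cnj (S q a n) = of_int q"
proof -
  define f where "f x = e_mod q (a * x^2 + n * x)" for x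
  have q0: "q \<noteq> 0" using q by simp
  have f_mod: "f (x mod q) = f x" for x unfolding f_def by (rule e_mod_quadratic_mod[OF q0])
  have shift: "f (h + y) * cnj (f y) = e_mod q (a * h^2 + n * h) * e_mod q ((2 * a * h) * y)" for h y
  proof -
    have "(a * (h + y)^2 + n * (h + y)) + - (a * y^2 + n * y) = (a * h^2 + n * h) + (2 * a * h) * y"
      by (simp add: power2_eq_square algebra_simps)
    then show ?thesis unfolding f_def cnj_e_mod by (metis e_mod_add[OF q0])
  qed
  have orth: "(\<Sum>y\<in>{0..<q}. e_mod q ((2 * a * h) * y)) = (if h = 0 then of_int q else 0)"
    if h: "h \<in> {0..<q}" for h
  proof -
    have "q dvd 2 * a * h \<longleftrightarrow> q dvd h"
      using a by (metis coprime_commute coprime_dvd_mult_right_iff mult.commute)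
    also have "\<dots> \<longleftrightarrow> h = 0" using h zdvd_imp_le[of q h] by force
    finally show ?thesis using sum_e_mod_linear[OF q, of "2 * a * h"] by simp
  qed
  have "S q a n * cnj (S q a n) = (\<Sum>y\<in>{0..<q}. \<Sum>x\<in>{0..<q}. f x * cnj (f y))"
    unfolding S_eq_sum_residues[OF q] f_def[symmetric] sum_product cnj_sum by (rule sum.swap)
  also have "\<dots> = (\<Sum>y\<in>{0..<q}. \<Sum>h\<in>{0..<q}. f (1 * h + y) * cnj (f y))"
    by (intro sum.cong refl sum_residues_affine[symmetric]) (use q f_mod in auto)
  also have "\<dots> = (\<Sum>h\<in>{0..<q}. e_mod q (a * h^2 + n * h) * (\<Sum>y\<in>{0..<q}. e_mod q ((2 * a * h) * y)))"
    unfolding sum_distrib_left by (simp add: shift) (rule sum.swap)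
  also have "\<dots> = (\<Sum>h\<in>{0..<q}. if h = 0 then of_int q else 0)"
    by (intro sum.cong refl) (simp add: orth)
  also have "\<dots> = of_int q" using q by simp
  finally show ?thesis .
qed

lemma norm_S:
  assumes "q > 0" and "coprime (2 * a) q"
  shows "cmod (S q a n) = sqrt (of_int q)"
proof -
  have "complex_of_real ((cmod (S q a n))^2) = of_int q"
    using S_times_cnj_S[OF assms] complex_norm_square by metis
  then have "(cmod (S q a n))^2 = of_int q"
    by (metis of_real_eq_iff of_real_of_int_eq)
  then show ?thesis by (metis norm_ge_zero real_sqrt_unique)
qed

text \<open>Here \<open>w\<close> and \<open>h\<close> are inverses of \<open>a\<close> and \<open>2\<close> modulo \<open>q\<close>; the substitution
  \<open>x \<mapsto> x - h w n\<close> removes the linear term.\<close>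

lemma S_complete_square:
  assumes q: "q > 0" and w: "[a * w = 1] (mod q)" and h: "[2 * h = 1] (mod q)"
  shows "S q a n = e_mod q (- (w * (h * n)^2)) * S q a 0"
proof -
  have q0: "q \<noteq> 0" using q by simp
  obtain k where k: "a * w = 1 + q * k"
    using w by (metis cong_iff_dvd_diff dvd_def eq_diff_eq add.commute)
  obtain l where l: "2 * h = 1 + q * l"
    using h by (metis cong_iff_dvd_diff dvd_def eq_diff_eq add.commute)
  have shifted: "e_mod q (a * (x - h * w * n)^2 + n * (x - h * w * n))
      = e_mod q (- (w * (h * n)^2)) * e_mod q (a * x^2 + 0 * x)" for x
  proof -
    have "a * (x - h * w * n)^2 + n * (x - h * w * n) - (- (w * (h * n)^2) + (a * x^2 + 0 * x))
        = n * x * (1 - (a * w) * (2 * h)) + w * h * n^2 * (h * (a * w) + 2 * h - h - 1)"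
      by (simp add: power2_eq_square algebra_simps)
    also have "\<dots> = q * (w * h * n^2 * (h * k + l) - n * x * (k + l + q * k * l))"
      unfolding k l by (simp add: algebra_simps)
    finally have "[a * (x - h * w * n)^2 + n * (x - h * w * n)
        = - (w * (h * n)^2) + (a * x^2 + 0 * x)] (mod q)"
      unfolding cong_iff_dvd_diff by (metis dvd_triv_left)
    then show ?thesis by (simp add: e_mod_cong[OF q0] flip: e_mod_add[OF q0])
  qed
  have "S q a n
      = (\<Sum>x\<in>{0..<q}. e_mod q (a * (1 * x + - (h * w * n))^2 + n * (1 * x + - (h * w * n))))"
    unfolding S_eq_sum_residues[OF q]
    by (rule sum_residues_affine[symmetric]) (use q e_mod_quadratic_mod in auto)
  also have "\<dots> = e_mod q (- (w * (h * n)^2)) * S q a 0"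
    unfolding S_eq_sum_residues[OF q, of a 0] sum_distrib_left using shifted by simp
  finally show ?thesis .
qed

lemma norm_T_le:
  assumes q: "q > 0" and odd: "odd q"
  shows "cmod (T q n1 n2 n3 m) \<le> of_int q powr (5 / 2)"
proof -
  define U where "U = {a \<in> {1..q}. coprime a q}"
  have norm_S_U: "cmod (S q a n) = sqrt (of_int q)" if "a \<in> U" for a n
    using that odd by (intro norm_S[OF q]) (simp add: U_def)
  have "cmod (T q n1 n2 n3 m)
      \<le> (\<Sum>a\<in>U. cmod (S q a n1 * S q a n2 * S q a n3 * e (of_int (inv_mod q a * m) / of_int q)))"
    unfolding T_def U_def by (rule norm_sum)
  also have "\<dots> = real (card U) * sqrt (of_int q) ^ 3"
    by (simp add: norm_mult norm_S_U power3_eq_cube)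
  also have "\<dots> \<le> of_int q * sqrt (of_int q) ^ 3"
  proof (rule mult_right_mono)
    have "card U \<le> card {1..q}" unfolding U_def by (rule card_mono) auto
    then show "real (card U) \<le> of_int q" using q by simp
  qed (use q in simp)
  also have "\<dots> = of_int q powr (5 / 2)"
    using q by (simp add: powr_half_sqrt[symmetric] powr_realpow[symmetric] powr_powr powr_mult_base)
  finally show ?thesis .
qed

section \<open>Modular inverses and the Legendre symbol\<close>

lemma inv_mod_unique:
  assumes b: "b \<in> {1..q}" and ab: "[a * b = 1] (mod q)"
  shows "inv_mod q a = b"
  unfolding inv_mod_def
proof (rule the_equality)
  fix b' assume b': "b' \<in> {1..q} \<and> [a * b' = 1] (mod q)"
  have "coprime a q" using ab coprime_iff_invertible_int by blast
  then have "[b' = b] (mod q)" using b' ab by (metis cong_mult_lcancel cong_sym cong_trans)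
  then have "[b' - 1 = b - 1] (mod q)" by (rule cong_diff) simp
  then have "b' - 1 = b - 1" using b' b by (intro cong_less_imp_eq_int) auto
  then show "b' = b" by simp
qed (use assms in simp)

lemma inv_mod_correct:
  assumes "q > 0" and "coprime a q"
  shows "inv_mod q a \<in> {1..q}" and "[a * inv_mod q a = 1] (mod q)"
proof -
  obtain x where x: "[a * x = 1] (mod q)" using cong_solve_coprime_int[OF assms(2)] by blast
  define b where "b = (x - 1) mod q + 1"
  have "[b = x] (mod q)" unfolding b_def by (simp add: cong_def mod_add_left_eq)
  then have "[a * b = 1] (mod q)" using x by (meson cong_mult cong_refl cong_trans)
  moreover have "b \<in> {1..q}"
    using pos_mod_bound[OF assms(1), of "x - 1"] pos_mod_sign[OF assms(1), of "x - 1"]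
    unfolding b_def by simp
  ultimately show "inv_mod q a \<in> {1..q}" "[a * inv_mod q a = 1] (mod q)"
    using inv_mod_unique by simp_all
qed

lemma coprime_inv_mod:
  assumes "q > 0" and "coprime a q"
  shows "coprime (inv_mod q a) q"
proof -
  have "[inv_mod q a * a = 1] (mod q)" using inv_mod_correct(2)[OF assms] by (simp add: mult.commute)
  then show ?thesis using coprime_iff_invertible_int by blast
qed

lemma inv_mod_inv_mod:
  assumes "q > 0" and "a \<in> {1..q}" and "coprime a q"
  shows "inv_mod q (inv_mod q a) = a"
  using assms inv_mod_correct[OF assms(1,3)] by (intro inv_mod_unique) (simp_all add: mult.commute)

lemma bij_betw_inv_mod:
  assumes "q > 0"
  shows "bij_betw (inv_mod q) {a \<in> {1..q}. coprime a q} {a \<in> {1..q}. coprime a q}"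
  by (rule bij_betw_byWitness[where f' = "inv_mod q"])
    (use assms inv_mod_inv_mod inv_mod_correct(1) coprime_inv_mod in auto)

lemma Legendre_cong:
  assumes "[y = z] (mod P)"
  shows "Legendre y P = Legendre z P"
proof -
  have "[y = 0] (mod P) \<longleftrightarrow> [z = 0] (mod P)" and "QuadRes P y \<longleftrightarrow> QuadRes P z"
    using assms cong_sym cong_trans unfolding QuadRes_def by blast+
  then show ?thesis unfolding Legendre_def by simp
qed

lemma Legendre_eq_0: "P dvd y \<Longrightarrow> Legendre y P = 0"
  unfolding Legendre_def by (simp add: cong_0_iff)

lemma Legendre_not_dvd: "\<not> P dvd y \<Longrightarrow> Legendre y P = 1 \<or> Legendre y P = -1"
  unfolding Legendre_def by (simp add: cong_0_iff)

lemma Legendre_1: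
  assumes "P > 1"
  shows "Legendre 1 P = 1"
proof -
  have "QuadRes P 1" unfolding QuadRes_def by (rule exI[of _ 1]) simp
  then show ?thesis using assms unfolding Legendre_def cong_0_iff by (simp add: zdvd1_eq)
qed

lemma square_roots_mod_prime:
  fixes P :: int
  assumes P: "prime P" and x0: "x0 \<in> {1..<P}"
  shows "{x \<in> {0..<P}. [x^2 = x0^2] (mod P)} = {x0, P - x0}"
proof (intro equalityI subsetI)
  fix x assume x: "x \<in> {x \<in> {0..<P}. [x^2 = x0^2] (mod P)}"
  have "(x - x0) * (x + x0) = x^2 - x0^2" by (simp add: power2_eq_square algebra_simps)
  then have "P dvd (x - x0) * (x + x0)" using x by (simp add: cong_iff_dvd_diff)
  then have "P dvd x - x0 \<or> P dvd x + x0" using prime_dvd_mult_iff[OF P] by blast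
  moreover have "x - (P - x0) = (x + x0) - P" by simp
  ultimately have "[x = x0] (mod P) \<or> [x = P - x0] (mod P)"
    unfolding cong_iff_dvd_diff by (metis dvd_diff dvd_refl)
  then show "x \<in> {x0, P - x0}"
  proof
    assume "[x = x0] (mod P)"
    then have "x = x0" using x x0 by (intro cong_less_imp_eq_int) auto
    then show ?thesis by simp
  next
    assume "[x = P - x0] (mod P)"
    then have "x = P - x0" using x x0 by (intro cong_less_imp_eq_int) auto
    then show ?thesis by simp
  qed
next
  have "(P - x0)^2 - x0^2 = P * (P - 2 * x0)" by (simp add: power2_eq_square algebra_simps)
  then have "[(P - x0)^2 = x0^2] (mod P)" by (simp add: cong_iff_dvd_diff)
  then show "x \<in> {x \<in> {0..<P}. [x^2 = x0^2] (mod P)}" if "x \<in> {x0, P - x0}" for x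
    using that x0 by auto
qed

section \<open>Odd prime moduli\<close>

context
  fixes P :: int
  assumes prime_P: "prime P" and P_gt_2: "2 < P"
begin

private lemma P_pos: "P > 0"
  using P_gt_2 by simp

private lemma P_ne_0: "P \<noteq> 0"
  using P_gt_2 by simp

private lemma odd_P: "odd P"
  using prime_odd_int[OF prime_P P_gt_2] .

private lemma coprime_iff_not_dvd: "coprime a P \<longleftrightarrow> \<not> P dvd a"
proof
  assume cop: "coprime a P"
  show "\<not> P dvd a"
  proof
    assume "P dvd a"
    with cop have "is_unit P" by (rule coprime_common_divisor) simp
    then show False using prime_P by (simp add: not_prime_unit)
  qed
next
  assume "\<not> P dvd a"
  then show "coprime a P" using prime_imp_coprime[OF prime_P] coprime_commute by blast
qed

private lemma Legendre_e_mod_mod: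
  "of_int (Legendre (y mod P) P) * e_mod P (k * (y mod P)) = of_int (Legendre y P) * e_mod P (k * y)"
proof -
  have "[y mod P = y] (mod P)" and "[k * (y mod P) = k * y] (mod P)"
    by (simp_all add: cong_def mod_mult_right_eq)
  then show ?thesis using P_pos by (simp add: Legendre_cong e_mod_cong)
qed

lemma Legendre_mult: "Legendre (a * b) P = Legendre a P * Legendre b P"
proof -
  have P: "prime (nat P)" "2 < nat P" "int (nat P) = P" using prime_P P_gt_2 by auto
  define N where "N = (nat P - 1) div 2"
  have "[Legendre (a * b) P = (a * b) ^ N] (mod P)"
    using euler_criterion[OF P(1,2)] unfolding N_def P(3) .
  moreover have "[Legendre a P * Legendre b P = a ^ N * b ^ N] (mod P)"
    using euler_criterion[OF P(1,2)] unfolding N_def P(3) by (intro cong_mult)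
  \<comment> \<open>Shifted by 1, the values \<open>-1, 0, 1\<close> of the Legendre symbol are distinct residues
    modulo \<open>P > 2\<close>.\<close>
  ultimately have cong: "[Legendre (a * b) P + 1 = Legendre a P * Legendre b P + 1] (mod P)"
    by (intro cong_add cong_refl) (metis cong_sym cong_trans power_mult_distrib)
  have L: "Legendre y P \<in> {-1, 0, 1}" for y unfolding Legendre_def by simp
  have "Legendre a P * Legendre b P \<in> {-1, 0, 1}" using L[of a] L[of b] by auto
  then have "Legendre (a * b) P + 1 = Legendre a P * Legendre b P + 1"
    using L[of "a * b"] P_gt_2 by (intro cong_less_imp_eq_int[OF _ _ _ _ cong]) auto
  then show ?thesis by simp
qed

lemma Legendre_inv_mod:
  assumes "coprime a P"
  shows "Legendre (inv_mod P a) P = Legendre a P"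
proof -
  have "Legendre a P * Legendre (inv_mod P a) P = Legendre 1 P"
    unfolding Legendre_mult[symmetric] by (rule Legendre_cong) (rule inv_mod_correct(2)[OF P_pos assms])
  also have "\<dots> = 1" using P_gt_2 by (simp add: Legendre_1)
  finally show ?thesis
    using Legendre_not_dvd[of P a] assms by (auto simp: coprime_iff_not_dvd)
qed

lemma card_square_roots_mod:
  assumes y: "y \<in> {0..<P}"
  shows "int (card {x \<in> {0..<P}. x^2 mod P = y}) = 1 + Legendre y P"
proof -
  have roots: "{x \<in> {0..<P}. x^2 mod P = y} = {x \<in> {0..<P}. [x^2 = y] (mod P)}"
    using y by (auto simp: cong_def)
  have cong_y_0: "[y = 0] (mod P) \<longleftrightarrow> y = 0"
    using y cong_less_imp_eq_int[of y P 0] by auto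
  consider "y = 0" | "y \<noteq> 0" "QuadRes P y" | "y \<noteq> 0" "\<not> QuadRes P y" by blast
  then show ?thesis
  proof cases
    case 1
    have "x = 0" if x: "x \<in> {0..<P}" "[x^2 = 0] (mod P)" for x
    proof -
      have "P dvd x" using x(2) prime_dvd_power[OF prime_P] by (simp add: cong_0_iff)
      then show "x = 0" using x(1) cong_less_imp_eq_int[of x P 0] by (simp add: cong_0_iff)
    qed
    then have "{x \<in> {0..<P}. [x^2 = y] (mod P)} = {0}" using 1 P_pos by auto
    then show ?thesis unfolding roots using 1 by (simp add: Legendre_eq_0)
  next
    case 2
    then obtain z where z: "[z^2 = y] (mod P)" unfolding QuadRes_def by blast
    define x0 where "x0 = z mod P"
    have "[x0 = z] (mod P)" unfolding x0_def by simp
    then have x0y: "[x0^2 = y] (mod P)" using cong_trans[OF cong_pow z] by blast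
    have "x0 \<noteq> 0"
    proof
      assume "x0 = 0"
      then have "[y = 0] (mod P)" using cong_sym[OF x0y] by simp
      then show False using 2 cong_y_0 by simp
    qed
    then have x0: "x0 \<in> {1..<P}"
      unfolding x0_def using pos_mod_sign[OF P_pos, of z] pos_mod_bound[OF P_pos, of z] by simp
    have "[x^2 = y] (mod P) \<longleftrightarrow> [x^2 = x0^2] (mod P)" for x
      using cong_trans[OF _ cong_sym[OF x0y], of "x^2"] cong_trans[OF _ x0y, of "x^2"] by blast
    then have "{x \<in> {0..<P}. [x^2 = y] (mod P)} = {x0, P - x0}"
      using square_roots_mod_prime[OF prime_P x0] by simp
    moreover have "x0 \<noteq> P - x0"
    proof
      assume "x0 = P - x0"
      then have "P = 2 * x0" by simp
      then show False using odd_P by simp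
    qed
    moreover have "Legendre y P = 1" using 2 cong_y_0 by (simp add: Legendre_def)
    ultimately show ?thesis unfolding roots by simp
  next
    case 3
    then have no_roots: "{x \<in> {0..<P}. [x^2 = y] (mod P)} = {}" unfolding QuadRes_def by blast
    have "Legendre y P = -1" using 3 cong_y_0 by (simp add: Legendre_def)
    then show ?thesis unfolding roots no_roots by simp
  qed
qed

lemma S_eq_sum_card_square_roots:
  "S P c 0 = (\<Sum>y\<in>{0..<P}. (1 + of_int (Legendre y P)) * e_mod P (c * y))"
proof -
  have "S P c 0 = (\<Sum>x\<in>{0..<P}. e_mod P (c * (x^2 mod P)))"
    unfolding S_eq_sum_residues[OF P_pos] using P_pos
    by (intro sum.cong refl e_mod_cong) (simp_all add: cong_def mod_mult_right_eq)
  also have "\<dots> = (\<Sum>y\<in>{0..<P}. \<Sum>x\<in>{x \<in> {0..<P}. x^2 mod P = y}. e_mod P (c * (x^2 mod P)))"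
    by (rule sum.group[symmetric]) (use P_pos in auto)
  also have "\<dots> = (\<Sum>y\<in>{0..<P}. of_nat (card {x \<in> {0..<P}. x^2 mod P = y}) * e_mod P (c * y))"
  proof (intro sum.cong refl)
    fix y
    have "(\<Sum>x\<in>{x \<in> {0..<P}. x^2 mod P = y}. e_mod P (c * (x^2 mod P)))
        = (\<Sum>x\<in>{x \<in> {0..<P}. x^2 mod P = y}. e_mod P (c * y))"
      by (rule sum.cong) auto
    then show "(\<Sum>x\<in>{x \<in> {0..<P}. x^2 mod P = y}. e_mod P (c * (x^2 mod P)))
        = of_nat (card {x \<in> {0..<P}. x^2 mod P = y}) * e_mod P (c * y)"
      by simp
  qed
  also have "\<dots> = (\<Sum>y\<in>{0..<P}. (1 + of_int (Legendre y P)) * e_mod P (c * y))"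
  proof (intro sum.cong refl)
    fix y assume "y \<in> {0..<P}"
    then have "(of_int (int (card {x \<in> {0..<P}. x^2 mod P = y})) :: complex)
        = of_int (1 + Legendre y P)"
      by (simp only: card_square_roots_mod)
    then show "of_nat (card {x \<in> {0..<P}. x^2 mod P = y}) * e_mod P (c * y)
        = (1 + of_int (Legendre y P)) * e_mod P (c * y)"
      by simp
  qed
  finally show ?thesis .
qed

lemma sum_Legendre_eq_0: "(\<Sum>y\<in>{0..<P}. (of_int (Legendre y P) :: complex)) = 0"
proof -
  have "S P 0 0 = of_int P" using S_eq_sum_residues[OF P_pos, of 0 0] P_pos by simp
  moreover have "S P 0 0 = of_int P + (\<Sum>y\<in>{0..<P}. of_int (Legendre y P))"
    unfolding S_eq_sum_card_square_roots using P_pos by (simp add: sum.distrib)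
  ultimately show ?thesis by simp
qed

lemma S_eq_Legendre_sum:
  assumes "\<not> P dvd c"
  shows "S P c 0 = (\<Sum>y\<in>{0..<P}. of_int (Legendre y P) * e_mod P (c * y))"
  using sum_e_mod_linear[OF P_pos, of c] assms
  unfolding S_eq_sum_card_square_roots by (simp add: distrib_right sum.distrib)

lemma S_Legendre_mult:
  assumes a: "\<not> P dvd a"
  shows "S P a 0 = of_int (Legendre a P) * S P 1 0"
proof -
  define chi where "chi y = (of_int (Legendre y P) :: complex)" for y
  have "\<not> P dvd 1" using P_gt_2 by auto
  then have "S P 1 0 = (\<Sum>y\<in>{0..<P}. chi y * e_mod P (1 * y))"
    using S_eq_Legendre_sum by (simp add: chi_def)
  also have "\<dots> = (\<Sum>y\<in>{0..<P}. chi (a * y + 0) * e_mod P (1 * (a * y + 0)))"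
    unfolding chi_def
    by (rule sum_residues_affine[symmetric])
      (use Legendre_e_mod_mod[of _ 1] a P_pos in \<open>simp_all add: coprime_iff_not_dvd\<close>)
  also have "\<dots> = chi a * (\<Sum>y\<in>{0..<P}. chi y * e_mod P (a * y))"
    unfolding sum_distrib_left chi_def by (simp add: Legendre_mult mult.assoc)
  also have "\<dots> = chi a * S P a 0"
    unfolding S_eq_Legendre_sum[OF a] chi_def ..
  finally have "chi a * S P 1 0 = (chi a * chi a) * S P a 0" by (simp only: mult.assoc)
  moreover have "chi a * chi a = 1" using Legendre_not_dvd[OF a] by (auto simp: chi_def)
  ultimately have "chi a * S P 1 0 = S P a 0" by simp
  then show ?thesis by (simp add: chi_def)
qed

lemma norm_sum_Legendre_e_mod_le:
  "cmod (\<Sum>b\<in>{0..<P}. of_int (Legendre b P) * e_mod P (k * b)) \<le> sqrt (of_int P)"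
proof (cases "P dvd k")
  case True
  then have "e_mod P (k * b) = 1" for b using P_pos by (simp add: e_mod_eq_1_iff)
  then show ?thesis using sum_Legendre_eq_0 P_pos by simp
next
  case False
  then have "coprime k P" using coprime_iff_not_dvd by blast
  then have "coprime (2 * k) P" using odd_P by simp
  then show ?thesis using S_eq_Legendre_sum[OF False] norm_S[OF P_pos, of k 0] by simp
qed

lemma T_prime_eq:
  assumes h: "[2 * h = 1] (mod P)"
  shows "T P n1 n2 n3 m = S P 1 0 ^ 3 *
    (\<Sum>b\<in>{0..<P}. of_int (Legendre b P) * e_mod P ((m - h^2 * (n1^2 + n2^2 + n3^2)) * b))"
proof -
  define U where "U = {a \<in> {1..P}. coprime a P}"
  define K where "K = m - h^2 * (n1^2 + n2^2 + n3^2)"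
  define chi where "chi y = (of_int (Legendre y P) :: complex)" for y
  have summand: "S P a n1 * S P a n2 * S P a n3 * e (of_int (inv_mod P a * m) / of_int P)
      = S P 1 0 ^ 3 * (chi a * e_mod P (K * inv_mod P a))" if a: "a \<in> U" for a
  proof -
    define w where "w = inv_mod P a"
    have w: "[a * w = 1] (mod P)" using inv_mod_correct(2)[OF P_pos] a by (simp add: U_def w_def)
    have "K * w = - (w * (h * n1)^2) + - (w * (h * n2)^2) + - (w * (h * n3)^2) + w * m"
      unfolding K_def by (simp add: power2_eq_square algebra_simps)
    then have "e_mod P (K * w) = e_mod P (- (w * (h * n1)^2)) * e_mod P (- (w * (h * n2)^2))
        * e_mod P (- (w * (h * n3)^2)) * e_mod P (w * m)"
      by (simp only: e_mod_add[OF P_ne_0])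
    moreover have "(x1 * s) * (x2 * s) * (x3 * s) * y = s ^ 3 * (x1 * x2 * x3 * y)"
      for x1 x2 x3 s y :: complex
      by (simp add: power3_eq_cube mult_ac)
    ultimately have "S P a n1 * S P a n2 * S P a n3 * e_mod P (w * m)
        = S P a 0 ^ 3 * e_mod P (K * w)"
      unfolding S_complete_square[OF P_pos w h, of n1] S_complete_square[OF P_pos w h, of n2]
        S_complete_square[OF P_pos w h, of n3] by simp
    moreover have a_unit: "\<not> P dvd a" using a by (simp add: U_def coprime_iff_not_dvd)
    then have "S P a 0 ^ 3 = chi a ^ 3 * S P 1 0 ^ 3"
      by (simp add: S_Legendre_mult chi_def power_mult_distrib)
    moreover have "chi a ^ 3 = chi a" using Legendre_not_dvd[OF a_unit] by (auto simp: chi_def)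
    ultimately show ?thesis unfolding w_def[symmetric] e_mod_def[symmetric] by (simp add: mult_ac)
  qed
  have "T P n1 n2 n3 m = S P 1 0 ^ 3 * (\<Sum>a\<in>U. chi a * e_mod P (K * inv_mod P a))"
    unfolding T_def U_def[symmetric] sum_distrib_left by (intro sum.cong refl summand)
  also have "(\<Sum>a\<in>U. chi a * e_mod P (K * inv_mod P a))
      = (\<Sum>a\<in>U. chi (inv_mod P a) * e_mod P (K * inv_mod P a))"
    by (intro sum.cong refl) (simp add: U_def chi_def Legendre_inv_mod)
  also have "\<dots> = (\<Sum>b\<in>U. chi b * e_mod P (K * b))"
    unfolding U_def by (rule sum.reindex_bij_betw[OF bij_betw_inv_mod[OF P_pos]])
  also have "\<dots> = (\<Sum>b\<in>{1..P}. chi b * e_mod P (K * b))"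
  proof (rule sum.mono_neutral_left)
    show "\<forall>b\<in>{1..P} - U. chi b * e_mod P (K * b) = 0"
    proof
      fix b assume "b \<in> {1..P} - U"
      then have "P dvd b" by (simp add: U_def coprime_iff_not_dvd)
      then show "chi b * e_mod P (K * b) = 0" by (simp add: chi_def Legendre_eq_0)
    qed
  qed (auto simp: U_def)
  also have "\<dots> = (\<Sum>b\<in>{0..<P}. chi b * e_mod P (K * b))"
    unfolding chi_def by (rule sum_Icc_eq_sum_residues[OF P_pos]) (rule Legendre_e_mod_mod)
  finally show ?thesis unfolding K_def chi_def .
qed

lemma norm_T_prime_le: "cmod (T P n1 n2 n3 m) \<le> of_int P ^ 2"
proof -
  obtain h where h: "[2 * h = 1] (mod P)" using cong_solve_coprime_int[of 2 P] odd_P by auto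
  have G: "cmod (S P 1 0) = sqrt (of_int P)" using norm_S[OF P_pos] odd_P by simp
  have "cmod (T P n1 n2 n3 m) \<le> sqrt (of_int P) ^ 3 * sqrt (of_int P)"
    unfolding T_prime_eq[OF h] norm_mult norm_power G
    by (intro mult_left_mono norm_sum_Legendre_e_mod_le) (use P_pos in simp)
  also have "\<dots> = (sqrt (of_int P) ^ 2) ^ 2" by (simp only: power2_eq_square power3_eq_cube mult.assoc)
  also have "\<dots> = of_int P ^ 2" using P_pos by simp
  finally show ?thesis .
qed

end

theorem lemma3p7:
  fixes p :: nat
  assumes "prime p" and "p > 2"
  shows "(\<forall>(r::nat) n1 n2 n3 m. r \<ge> 1 \<longrightarrow>
            cmod (T (int p ^ r) n1 n2 n3 m) \<le> real p powr (5 * real r / 2))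
       \<and> (\<forall>n1 n2 n3 m. cmod (T (int p) n1 n2 n3 m) \<le> real p ^ 2)"
proof -
  have P: "prime (int p)" "2 < int p" using assms by auto
  have "cmod (T (int p ^ r) n1 n2 n3 m) \<le> real p powr (5 * real r / 2)" for r n1 n2 n3 m
  proof -
    have "odd (int p ^ r)" using prime_odd_int[OF P] by simp
    then have "cmod (T (int p ^ r) n1 n2 n3 m) \<le> of_int (int p ^ r) powr (5 / 2)"
      using P by (intro norm_T_le) auto
    also have "\<dots> = real p powr (5 * real r / 2)"
      using P by (simp add: powr_realpow[symmetric] powr_powr mult.commute)
    finally show ?thesis .
  qed
  then show ?thesis using norm_T_prime_le[OF P] by simp
qed

end
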